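(* Let $\Gamma\in\mathcal S$ have vertices $v_1,\dots,v_n$ and let $\varphi$ be an embedding into $\mathbb Z^n$ with no index of type (10). Then $\varphi$ has no index of type (4) if and only if $\sum_{i=1}^n d(v_i)=-3n-1$.
   Context: A plumbing tree is a finite tree $\Gamma$ each of whose vertices $v$ carries an integer decoration $d(v)$. $\Gamma$ is minimal if no vertex has decoration $-1$. For $n\ge 1$ let $(\mathbb Z^n,Q_n)$ be the lattice with basis $E_1,\dots,E_n$ and $Q_n(E_i,E_j)=-\delta_{ij}$, and let $K=\sum_{i=1}^n E_i$. A plumbing tree $\Gamma$ on $n$ vertices is a symplectic plumbing tree if there is a map $\varphi$ (an embedding) from its vertex set to $\mathbb Z^n$ such that: for distinct vertices $v_1,v_2$, $Q_n(\varphi(v_1),\varphi(v_2))$ is $1$ if they are adjacent and $0$ otherwise; $Q_n(\varphi(v),\varphi(v))=d(v)$ for every $v$; and $Q_n(\varphi(v),K)+Q_n(\varphi(v),\varphi(v))=-2$ for every $v$. $\mathcal S$ is the set of minimal, connected symplectic plumbing trees. Index types: write $\varphi(v)=\sum_i a_{v,i}E_i$; for an index $i$ consider the multiset of nonzero coefficients $a_{v,i}$ as $v$ ranges over all vertices. Index $i$ is of type (1) if this multiset is $\{1\}$, (2) if $\{-1\}$, (3) if $\{-2\}$, (4) if $\{1,-1\}$, (5) if $\{1,-2\}$, (6) if $\{-1,-1\}$, (7) if $\{1,-1,-1\}$, (9) if $\{1,-1,-1,-1\}$, and (10) if it is empty. *)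

theory Defs
  imports Main "HOL-Library.Multiset"
begin

text \<open>A plumbing graph on n vertices: vertices are 0..<n, adjacency adj, decoration d.
  Lattice vectors of Z^n are functions nat => int supported on {0..<n}.\<close>

definition Qn :: "nat \<Rightarrow> (nat \<Rightarrow> int) \<Rightarrow> (nat \<Rightarrow> int) \<Rightarrow> int" where
  "Qn n x y = - (\<Sum>i<n. x i * y i)"

definition Kvec :: "nat \<Rightarrow> int" where
  "Kvec = (\<lambda>_. 1)"

definition graph_connected :: "nat \<Rightarrow> (nat \<Rightarrow> nat \<Rightarrow> bool) \<Rightarrow> bool" where
  "graph_connected n adj \<longleftrightarrow>
     (\<forall>u<n. \<forall>v<n. (u, v) \<in> {(x, y). adj x y}\<^sup>*)"

definition graph_acyclic :: "(nat \<Rightarrow> nat \<Rightarrow> bool) \<Rightarrow> bool" where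
  "graph_acyclic adj \<longleftrightarrow>
     \<not> (\<exists>vs. length vs \<ge> 3 \<and> distinct vs
          \<and> (\<forall>j. j + 1 < length vs \<longrightarrow> adj (vs ! j) (vs ! (j + 1)))
          \<and> adj (last vs) (hd vs))"

definition plumbing_tree :: "nat \<Rightarrow> (nat \<Rightarrow> nat \<Rightarrow> bool) \<Rightarrow> bool" where
  "plumbing_tree n adj \<longleftrightarrow>
     n \<ge> 1
     \<and> (\<forall>u v. adj u v \<longrightarrow> u < n \<and> v < n)
     \<and> (\<forall>u v. adj u v \<longrightarrow> adj v u)
     \<and> (\<forall>u. \<not> adj u u)
     \<and> graph_connected n adj
     \<and> graph_acyclic adj"

definition is_embedding ::
  "nat \<Rightarrow> (nat \<Rightarrow> nat \<Rightarrow> bool) \<Rightarrow> (nat \<Rightarrow> int) \<Rightarrow> (nat \<Rightarrow> nat \<Rightarrow> int) \<Rightarrow> bool" where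
  "is_embedding n adj d \<phi> \<longleftrightarrow>
     (\<forall>v<n. \<forall>i. n \<le> i \<longrightarrow> \<phi> v i = 0)
     \<and> (\<forall>u<n. \<forall>v<n. u \<noteq> v \<longrightarrow> Qn n (\<phi> u) (\<phi> v) = (if adj u v then 1 else 0))
     \<and> (\<forall>v<n. Qn n (\<phi> v) (\<phi> v) = d v)
     \<and> (\<forall>v<n. Qn n (\<phi> v) Kvec + Qn n (\<phi> v) (\<phi> v) = -2)"

definition symplectic_plumbing_tree :: "nat \<Rightarrow> (nat \<Rightarrow> nat \<Rightarrow> bool) \<Rightarrow> (nat \<Rightarrow> int) \<Rightarrow> bool" where
  "symplectic_plumbing_tree n adj d \<longleftrightarrow>
     plumbing_tree n adj \<and> (\<exists>\<phi>. is_embedding n adj d \<phi>)"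

definition in_S :: "nat \<Rightarrow> (nat \<Rightarrow> nat \<Rightarrow> bool) \<Rightarrow> (nat \<Rightarrow> int) \<Rightarrow> bool" where
  "in_S n adj d \<longleftrightarrow>
     symplectic_plumbing_tree n adj d \<and> graph_connected n adj \<and> (\<forall>v<n. d v \<noteq> -1)"

definition index_mset :: "nat \<Rightarrow> (nat \<Rightarrow> nat \<Rightarrow> int) \<Rightarrow> nat \<Rightarrow> int multiset" where
  "index_mset n \<phi> i = image_mset (\<lambda>v. \<phi> v i) (mset_set {v. v < n \<and> \<phi> v i \<noteq> 0})"

definition index_type4 :: "nat \<Rightarrow> (nat \<Rightarrow> nat \<Rightarrow> int) \<Rightarrow> nat \<Rightarrow> bool" where
  "index_type4 n \<phi> i \<longleftrightarrow> index_mset n \<phi> i = {#1, -1#}"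

definition index_type10 :: "nat \<Rightarrow> (nat \<Rightarrow> nat \<Rightarrow> int) \<Rightarrow> nat \<Rightarrow> bool" where
  "index_type10 n \<phi> i \<longleftrightarrow> index_mset n \<phi> i = {#}"

end

theory Submission
  imports Defs
begin

(* Let s_i be the sum of the i-th coefficients of all vertex vectors. The adjunction
   condition reads sum_i a_{v,i} (a_{v,i} + 1) = 2 for every vertex v. Expanding
   Q(sum_v phi(v), sum_v phi(v)), and using that a tree on n vertices has n - 1 edges,
   gives sum_i s_i (s_i + 1) = 2, hence
     sum_i (s_i + 1) (s_i + 2) = 2 (sum_v d(v) + 3n + 1),
   so sum_v d(v) = -3n - 1 exactly when every s_i lies in {-2, -1}. An index of type (4)
   has s_i = 0. Conversely, a nonempty index with s_i = 0 is of type (4), because two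
   vectors with a 1 at the same index would have positive product. Finally s_j = 1 forces
   s_i = -1 for all other i; pairing the vertex u with a_{u,j} = 1 against s then shows
   that u has no neighbours, which contradicts connectedness or, if n = 1, minimality. *)

lemma pronic_nonneg: "0 \<le> s * (s + 1)" for s :: int
  by (cases "0 \<le> s") (auto simp: zero_le_mult_iff)

lemma pronic_eq_0_iff: "s * (s + 1) = 0 \<longleftrightarrow> s \<in> {-1, 0}" for s :: int
  by auto

lemma pronic_ge_2: "s \<notin> {-1, 0} \<Longrightarrow> 2 \<le> s * (s + 1)" for s :: int
proof -
  assume "s \<notin> {-1, 0}"
  then consider "1 \<le> s" | "s \<le> -2" by fastforce
  then show ?thesis
  proof cases
    case 1
    then have "1 * 2 \<le> s * (s + 1)" by (intro mult_mono) auto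
    then show ?thesis by simp
  next
    case 2
    then have "2 * 1 \<le> (- s) * (- s - 1)" by (intro mult_mono) auto
    then show ?thesis by (simp add: algebra_simps)
  qed
qed

lemma pronic_le_2_iff: "s * (s + 1) \<le> 2 \<longleftrightarrow> s \<in> {-2, -1, 0, 1}" for s :: int
proof
  assume "s * (s + 1) \<le> 2"
  moreover have "6 \<le> s * (s + 1)" if "s \<notin> {-2, -1, 0, 1}"
  proof -
    from that consider "2 \<le> s" | "s \<le> -3" by fastforce
    then show ?thesis
    proof cases
      case 1
      then have "2 * 3 \<le> s * (s + 1)" by (intro mult_mono) auto
      then show ?thesis by simp
    next
      case 2
      then have "3 * 2 \<le> (- s) * (- s - 1)" by (intro mult_mono) auto
      then show ?thesis by (simp add: algebra_simps)
    qed
  qed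
  ultimately show "s \<in> {-2, -1, 0, 1}" by fastforce
qed auto

lemma sum_pronic_eq_2:
  fixes f :: "'a \<Rightarrow> int"
  assumes "finite I" "(\<Sum>i\<in>I. f i * (f i + 1)) = 2" "i \<in> I"
  shows sum_pronic_eq_2_range: "f i \<in> {-2, -1, 0, 1}"
    and sum_pronic_eq_2_others: "f i \<notin> {-1, 0} \<Longrightarrow> k \<in> I \<Longrightarrow> k \<noteq> i \<Longrightarrow> f k \<in> {-1, 0}"
proof -
  have "f i * (f i + 1) \<le> 2"
    using member_le_sum[of i I "\<lambda>i. f i * (f i + 1)"] assms pronic_nonneg by simp
  then show "f i \<in> {-2, -1, 0, 1}" by (simp add: pronic_le_2_iff)
next
  assume "f i \<notin> {-1, 0}" "k \<in> I" "k \<noteq> i"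
  then have "(\<Sum>j\<in>{i, k}. f j * (f j + 1)) \<le> 2"
    using sum_mono2[of I "{i, k}" "\<lambda>j. f j * (f j + 1)"] assms pronic_nonneg by simp
  then have "f k * (f k + 1) \<le> 0"
    using pronic_ge_2[OF \<open>f i \<notin> {-1, 0}\<close>] \<open>k \<noteq> i\<close> by simp
  then show "f k \<in> {-1, 0}"
    using pronic_nonneg[of "f k"] pronic_eq_0_iff by (metis antisym)
qed

definition edges_on :: "'a set \<Rightarrow> ('a \<Rightarrow> 'a \<Rightarrow> bool) \<Rightarrow> ('a \<times> 'a) set" where
  "edges_on V adj = {(x, y). adj x y \<and> x \<in> V \<and> y \<in> V}"

definition connected_on :: "'a set \<Rightarrow> ('a \<Rightarrow> 'a \<Rightarrow> bool) \<Rightarrow> bool" where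
  "connected_on V adj \<longleftrightarrow> (\<forall>u\<in>V. \<forall>v\<in>V. (u, v) \<in> (edges_on V adj)\<^sup>*)"

lemma successively_conv_nth:
  "successively P xs \<longleftrightarrow> (\<forall>j. j + 1 < length xs \<longrightarrow> P (xs ! j) (xs ! (j + 1)))"
  by (induction P xs rule: successively.induct) (auto simp: nth_Cons split: nat.splits)

lemma graph_acyclic_iff:
  "graph_acyclic adj \<longleftrightarrow>
     \<not> (\<exists>vs. 3 \<le> length vs \<and> distinct vs \<and> successively adj vs \<and> adj (last vs) (hd vs))"
  unfolding graph_acyclic_def successively_conv_nth ..

lemma acyclic_graph_has_leaf:
  assumes "finite V" and "symp adj" and irrefl: "\<And>u. \<not> adj u u"
    and acyclic: "graph_acyclic adj" and "adj a b" "a \<in> V" "b \<in> V"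
  shows "\<exists>l\<in>V. \<exists>p\<in>V. adj l p \<and> (\<forall>y\<in>V. adj l y \<longrightarrow> y = p)"
proof -
  define is_path where "is_path vs \<longleftrightarrow> distinct vs \<and> set vs \<subseteq> V \<and> successively adj vs" for vs
  have "is_path [a, b]"
    using assms(5-7) irrefl unfolding is_path_def by auto
  moreover have "length vs < Suc (card V)" if "is_path vs" for vs
  proof -
    have "length vs = card (set vs)"
      using that distinct_card unfolding is_path_def by metis
    also have "\<dots> \<le> card V"
      using that card_mono[OF \<open>finite V\<close>] unfolding is_path_def by blast
    finally show ?thesis by simp
  qed
  ultimately obtain vs where path: "is_path vs" and longest: "\<And>ws. is_path ws \<Longrightarrow> length ws \<le> length vs"
    using Lattices_Big.ex_has_greatest_nat[of is_path "[a, b]" length] by blast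
  have "2 \<le> length vs"
    using longest[OF \<open>is_path [a, b]\<close>] by simp
  then obtain x p rest where vs: "vs = x # p # rest"
    by (cases vs rule: list.exhaust[case_product list.exhaust[of "tl vs"]]) auto
  \<comment> \<open>A second neighbour of the end \<open>x\<close> would extend the path or close a cycle.\<close>
  have "y = p" if "y \<in> V" "adj x y" for y
  proof (rule ccontr)
    assume "y \<noteq> p"
    show False
    proof (cases "y \<in> set vs")
      case False
      have "adj y x" using sympD[OF \<open>symp adj\<close> \<open>adj x y\<close>] .
      with False have "is_path (y # vs)"
        using path \<open>y \<in> V\<close> unfolding is_path_def vs by simp
      then show False using longest[of "y # vs"] by simp
    next
      case True
      with \<open>y \<noteq> p\<close> irrefl \<open>adj x y\<close> have "y \<in> set rest" unfolding vs by auto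
      then obtain r1 r2 where "rest = r1 @ y # r2" by (meson split_list)
      then have "vs = (x # p # r1 @ [y]) @ r2" unfolding vs by simp
      then have "distinct (x # p # r1 @ [y])" "successively adj (x # p # r1 @ [y])"
        using path distinct_append successively_append_iff unfolding is_path_def by metis+
      moreover have "adj (last (x # p # r1 @ [y])) (hd (x # p # r1 @ [y]))"
        using sympD[OF \<open>symp adj\<close> \<open>adj x y\<close>] by simp
      moreover have "3 \<le> length (x # p # r1 @ [y])" by simp
      ultimately show False
        using acyclic unfolding graph_acyclic_iff by blast
    qed
  qed
  moreover have "x \<in> V" "p \<in> V" "adj x p"
    using path unfolding is_path_def vs by auto
  ultimately show ?thesis by blast
qed

lemma connected_on_remove_leaf:
  assumes "connected_on V adj" "symp adj" "p \<in> V" "l \<noteq> p"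
    and leaf: "\<And>y. y \<in> V \<Longrightarrow> adj l y \<Longrightarrow> y = p"
  shows "connected_on (V - {l}) adj"
proof -
  let ?W = "V - {l}"
  \<comment> \<open>A walk leaving \<open>p\<close> can only enter \<open>l\<close> as its very last step.\<close>
  have from_p: "x = l \<or> (p, x) \<in> (edges_on ?W adj)\<^sup>*" if "(p, x) \<in> (edges_on V adj)\<^sup>*" for x
    using that
  proof (induction rule: rtrancl_induct)
    case (step y z)
    then have "adj y z" "z \<in> V" unfolding edges_on_def by auto
    show ?case
    proof (cases "y = l")
      case True
      with leaf \<open>adj y z\<close> \<open>z \<in> V\<close> have "z = p" by blast
      then show ?thesis by simp
    next
      case False
      with step.IH have "(p, y) \<in> (edges_on ?W adj)\<^sup>*" by blast
      moreover have "z = l \<or> (y, z) \<in> edges_on ?W adj"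
        using step.hyps(2) False unfolding edges_on_def by auto
      ultimately show ?thesis by (meson rtrancl.rtrancl_into_rtrancl)
    qed
  qed simp
  have sym_edges: "(edges_on ?W adj)\<inverse> = edges_on ?W adj"
    using \<open>symp adj\<close> unfolding edges_on_def by (auto intro: sympD)
  show ?thesis
    unfolding connected_on_def
  proof (intro ballI)
    fix u v assume "u \<in> ?W" "v \<in> ?W"
    then have "(p, u) \<in> (edges_on ?W adj)\<^sup>*" "(p, v) \<in> (edges_on ?W adj)\<^sup>*"
      using from_p assms(1,3) unfolding connected_on_def by auto
    then show "(u, v) \<in> (edges_on ?W adj)\<^sup>*"
      by (metis rtrancl_converseI rtrancl_trans sym_edges)
  qed
qed

lemma edges_on_remove_leaf:
  assumes "symp adj" "l \<in> V" "p \<in> V" "adj l p"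
    and leaf: "\<And>y. y \<in> V \<Longrightarrow> adj l y \<Longrightarrow> y = p"
  shows "edges_on V adj = insert (l, p) (insert (p, l) (edges_on (V - {l}) adj))"
  using assms(2-4) leaf sympD[OF assms(1)] unfolding edges_on_def by blast

lemma finite_edges_on: "finite V \<Longrightarrow> finite (edges_on V adj)"
  unfolding edges_on_def by (rule finite_subset[of _ "V \<times> V"]) auto

lemma tree_card_edges_on:
  assumes "finite V" "V \<noteq> {}" "symp adj" "\<And>u. \<not> adj u u" "graph_acyclic adj"
    and "connected_on V adj"
  shows "card (edges_on V adj) = 2 * (card V - 1)"
  using assms
proof (induction "card V" arbitrary: V)
  case 0
  then show ?case by simp
next
  case (Suc k)
  show ?case
  proof (cases "k = 0")
    case True
    then obtain x where "V = {x}"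
      using Suc.hyps(2) card_1_singletonE by (metis One_nat_def)
    then have "edges_on V adj = {}" using Suc.prems(4) unfolding edges_on_def by auto
    then show ?thesis using \<open>V = {x}\<close> by simp
  next
    case False
    then have "\<not> card V \<le> Suc 0" using Suc.hyps(2) by simp
    then obtain a b where "a \<in> V" "b \<in> V" "a \<noteq> b"
      using card_le_Suc0_iff_eq[OF Suc.prems(1)] by blast
    with Suc.prems(6) obtain z where "(a, z) \<in> edges_on V adj"
      unfolding connected_on_def by (meson converse_rtranclE)
    then obtain l p where "l \<in> V" "p \<in> V" "adj l p" and leaf: "\<And>y. y \<in> V \<Longrightarrow> adj l y \<Longrightarrow> y = p"
      using acyclic_graph_has_leaf[OF Suc.prems(1,3,4,5)] unfolding edges_on_def by blast
    have "l \<noteq> p" using \<open>adj l p\<close> Suc.prems(4) by blast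
    let ?W = "V - {l}"
    have "card ?W = k" "?W \<noteq> {}"
      using Suc.hyps(2) \<open>l \<in> V\<close> \<open>p \<in> V\<close> \<open>l \<noteq> p\<close> by (auto simp: card_Diff_singleton)
    moreover have "connected_on ?W adj"
      using connected_on_remove_leaf[OF Suc.prems(6,3) \<open>p \<in> V\<close> \<open>l \<noteq> p\<close> leaf] .
    ultimately have IH: "card (edges_on ?W adj) = 2 * (k - 1)"
      using Suc.hyps(1) Suc.prems(1,3,4,5) by simp
    have "finite (edges_on ?W adj)"
      using Suc.prems(1) by (simp add: finite_edges_on)
    moreover have "(l, p) \<notin> insert (p, l) (edges_on ?W adj)" "(p, l) \<notin> edges_on ?W adj"
      using \<open>l \<noteq> p\<close> unfolding edges_on_def by auto
    ultimately have "card (edges_on V adj) = card (edges_on ?W adj) + 2"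
      using edges_on_remove_leaf[OF Suc.prems(3) \<open>l \<in> V\<close> \<open>p \<in> V\<close> \<open>adj l p\<close> leaf] by simp
    with IH False Suc.hyps(2) show ?thesis by simp
  qed
qed

definition degree :: "nat \<Rightarrow> (nat \<Rightarrow> nat \<Rightarrow> bool) \<Rightarrow> nat \<Rightarrow> nat" where
  "degree n adj u = card {v. v < n \<and> adj u v}"

lemma sum_degree_eq_card_edges_on:
  "(\<Sum>u<n. degree n adj u) = card (edges_on {..<n} adj)"
proof -
  have "edges_on {..<n} adj = (SIGMA u:{..<n}. {v. v < n \<and> adj u v})"
    unfolding edges_on_def by auto
  then show ?thesis unfolding degree_def by simp
qed

lemma plumbing_treeD:
  assumes "plumbing_tree n adj"
  shows "1 \<le> n" "adj u v \<Longrightarrow> u < n \<and> v < n" "symp adj" "\<not> adj u u"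
    "graph_connected n adj" "graph_acyclic adj"
  using assms unfolding plumbing_tree_def symp_def by blast+

lemma plumbing_tree_sum_degree:
  assumes "plumbing_tree n adj"
  shows "(\<Sum>u<n. degree n adj u) = 2 * (n - 1)"
proof -
  have "{(x, y). adj x y} = edges_on {..<n} adj"
    using plumbing_treeD(2)[OF assms] unfolding edges_on_def by blast
  then have "connected_on {..<n} adj"
    using plumbing_treeD(5)[OF assms] unfolding graph_connected_def connected_on_def by simp
  then have "card (edges_on {..<n} adj) = 2 * (card {..<n} - 1)"
    using plumbing_treeD[OF assms] by (intro tree_card_edges_on) (auto simp: lessThan_empty_iff bot_nat_def)
  then show ?thesis by (simp add: sum_degree_eq_card_edges_on)
qed

lemma plumbing_tree_degree_pos:
  assumes "plumbing_tree n adj" "u < n" "2 \<le> n"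
  shows "0 < degree n adj u"
proof -
  define v :: nat where "v = (if u = 0 then 1 else 0)"
  have "v < n" "v \<noteq> u" using assms(2,3) unfolding v_def by auto
  then have "(u, v) \<in> {(x, y). adj x y}\<^sup>*"
    using plumbing_treeD(5)[OF assms(1)] assms(2) unfolding graph_connected_def by blast
  with \<open>v \<noteq> u\<close> obtain w where "adj u w"
    by (metis (no_types, lifting) case_prodD converse_rtranclE mem_Collect_eq)
  moreover have "w < n" using plumbing_treeD(2)[OF assms(1) \<open>adj u w\<close>] by blast
  ultimately have "w \<in> {v. v < n \<and> adj u v}" by blast
  then show ?thesis
    unfolding degree_def by (metis card_gt_0_iff empty_iff finite_Collect_conjI finite_Collect_less_nat)
qed

lemma image_mset_eq_one_neg_one:
  fixes f :: "'a \<Rightarrow> int"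
  assumes "finite A" "A \<noteq> {}" and range: "\<And>a. a \<in> A \<Longrightarrow> f a \<in> {-2, -1, 1}"
    and one_unique: "\<And>a b. a \<in> A \<Longrightarrow> b \<in> A \<Longrightarrow> f a = 1 \<Longrightarrow> f b = 1 \<Longrightarrow> a = b"
    and "sum f A = 0"
  shows "image_mset f (mset_set A) = {#1, -1#}"
proof -
  have sum_le_card: "sum f B \<le> - int (card B)" if "B \<subseteq> A" "\<And>b. b \<in> B \<Longrightarrow> f b \<noteq> 1" for B
  proof -
    have "sum f B \<le> (\<Sum>b\<in>B. -1)"
      using that range by (intro sum_mono) fastforce
    then show ?thesis by simp
  qed
  obtain u where "u \<in> A" "f u = 1"
    using sum_le_card[of A] \<open>finite A\<close> \<open>A \<noteq> {}\<close> \<open>sum f A = 0\<close> by (fastforce simp: card_gt_0_iff)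
  let ?B = "A - {u}"
  have "sum f ?B = -1"
    using \<open>sum f A = 0\<close> \<open>u \<in> A\<close> \<open>f u = 1\<close> \<open>finite A\<close> by (simp add: sum_diff1)
  moreover have "sum f ?B \<le> - int (card ?B)"
    using one_unique \<open>u \<in> A\<close> \<open>f u = 1\<close> by (intro sum_le_card) auto
  ultimately have "card ?B \<le> Suc 0" by linarith
  moreover obtain w where "w \<in> ?B"
    using \<open>sum f ?B = -1\<close> by (metis all_not_in_conv sum.empty zero_neq_neg_one)
  ultimately have "?B = {w}"
    using card_le_Suc0_iff_eq[of ?B] \<open>finite A\<close> by blast
  then have "A = {u, w}" "u \<noteq> w" "f w = -1"
    using \<open>u \<in> A\<close> \<open>sum f ?B = -1\<close> by auto
  with \<open>f u = 1\<close> show ?thesis by simp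
qed

lemma embedding_inner:
  assumes "is_embedding n adj d \<phi>" "u < n" "v < n"
  shows "(\<Sum>i<n. \<phi> u i * \<phi> v i) = (if u = v then - d u else - of_bool (adj u v))"
proof -
  have "Qn n (\<phi> u) (\<phi> v) = (if u = v then d u else of_bool (adj u v))"
    using assms unfolding is_embedding_def by auto
  then show ?thesis unfolding Qn_def by (metis minus_minus)
qed

lemma embedding_coeff_sum:
  assumes "is_embedding n adj d \<phi>" "v < n"
  shows "(\<Sum>i<n. \<phi> v i) = d v + 2"
proof -
  have "Qn n (\<phi> v) Kvec + d v = -2"
    using assms unfolding is_embedding_def by auto
  then show ?thesis unfolding Qn_def Kvec_def by simp
qed

lemma embedding_adjunction:
  assumes "is_embedding n adj d \<phi>" "v < n"
  shows "(\<Sum>i<n. \<phi> v i * (\<phi> v i + 1)) = 2"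
proof -
  have "(\<Sum>i<n. \<phi> v i * (\<phi> v i + 1)) = (\<Sum>i<n. \<phi> v i * \<phi> v i) + (\<Sum>i<n. \<phi> v i)"
    by (simp add: algebra_simps sum.distrib)
  then show ?thesis
    using embedding_inner[OF assms assms(2)] embedding_coeff_sum[OF assms] by simp
qed

lemma embedding_support:
  "is_embedding n adj d \<phi> \<Longrightarrow> v < n \<Longrightarrow> n \<le> i \<Longrightarrow> \<phi> v i = 0"
  unfolding is_embedding_def by blast

lemma embedding_coeff_range:
  assumes "is_embedding n adj d \<phi>" "v < n"
  shows "\<phi> v i \<in> {-2, -1, 0, 1}"
proof (cases "i < n")
  case True
  then show ?thesis
    using sum_pronic_eq_2_range[OF _ embedding_adjunction[OF assms]] by simp
qed (use embedding_support[OF assms] in simp)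

lemma embedding_coeff_eq_1_unique:
  assumes emb: "is_embedding n adj d \<phi>" and "u < n" "w < n" "\<phi> u i = 1" "\<phi> w i = 1"
  shows "u = w"
proof (rule ccontr)
  assume "u \<noteq> w"
  have "i < n" using embedding_support[OF emb \<open>u < n\<close>, of i] \<open>\<phi> u i = 1\<close> by (cases "i < n") auto
  have others: "\<phi> v k \<in> {-1, 0}" if "v < n" "\<phi> v i = 1" "k < n" "k \<noteq> i" for v k
    using sum_pronic_eq_2_others[OF _ embedding_adjunction[OF emb \<open>v < n\<close>]] that \<open>i < n\<close> by simp
  have "0 \<le> (\<Sum>k\<in>{..<n} - {i}. \<phi> u k * \<phi> w k)"
    using others[OF \<open>u < n\<close> \<open>\<phi> u i = 1\<close>] others[OF \<open>w < n\<close> \<open>\<phi> w i = 1\<close>]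
    by (intro sum_nonneg) fastforce
  moreover have "(\<Sum>k<n. \<phi> u k * \<phi> w k) = \<phi> u i * \<phi> w i + (\<Sum>k\<in>{..<n} - {i}. \<phi> u k * \<phi> w k)"
    using \<open>i < n\<close> by (simp add: sum.remove)
  moreover have "(\<Sum>k<n. \<phi> u k * \<phi> w k) \<le> 0"
    using embedding_inner[OF emb \<open>u < n\<close> \<open>w < n\<close>] \<open>u \<noteq> w\<close> by simp
  ultimately show False using \<open>\<phi> u i = 1\<close> \<open>\<phi> w i = 1\<close> by simp
qed

definition index_sum :: "nat \<Rightarrow> (nat \<Rightarrow> nat \<Rightarrow> int) \<Rightarrow> nat \<Rightarrow> int" where
  "index_sum n \<phi> i = (\<Sum>v<n. \<phi> v i)"

lemma sum_mset_index_mset: "sum_mset (index_mset n \<phi> i) = index_sum n \<phi> i"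
proof -
  have "sum_mset (index_mset n \<phi> i) = (\<Sum>v\<in>{v. v < n \<and> \<phi> v i \<noteq> 0}. \<phi> v i)"
    unfolding index_mset_def by (simp add: sum_unfold_sum_mset)
  also have "\<dots> = index_sum n \<phi> i"
    unfolding index_sum_def by (intro sum.mono_neutral_left) auto
  finally show ?thesis .
qed

lemma index_sum_eq_0_if_type4:
  assumes "index_type4 n \<phi> i"
  shows "index_sum n \<phi> i = 0"
proof -
  have "index_sum n \<phi> i = sum_mset {#1, -1 :: int#}"
    using assms unfolding index_type4_def sum_mset_index_mset[symmetric] by simp
  then show ?thesis by simp
qed

lemma index_type4_if_index_sum_eq_0:
  assumes emb: "is_embedding n adj d \<phi>" and "\<not> index_type10 n \<phi> i" "index_sum n \<phi> i = 0"
  shows "index_type4 n \<phi> i"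
proof -
  let ?A = "{v. v < n \<and> \<phi> v i \<noteq> 0}"
  have "?A \<noteq> {}"
    using \<open>\<not> index_type10 n \<phi> i\<close> unfolding index_type10_def index_mset_def
    by (metis image_mset_empty mset_set.empty)
  moreover have "\<phi> v i \<in> {-2, -1, 1}" if "v \<in> ?A" for v
    using embedding_coeff_range[OF emb, of v i] that by auto
  moreover have "sum (\<lambda>v. \<phi> v i) ?A = 0"
    using \<open>index_sum n \<phi> i = 0\<close> sum_mset_index_mset[of n \<phi> i]
    unfolding index_mset_def by (simp add: sum_unfold_sum_mset)
  ultimately have "index_mset n \<phi> i = {#1, -1#}"
    unfolding index_mset_def
    by (intro image_mset_eq_one_neg_one) (auto intro: embedding_coeff_eq_1_unique[OF emb])
  then show ?thesis unfolding index_type4_def .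
qed

lemma embedding_inner_index_sum:
  assumes emb: "is_embedding n adj d \<phi>" and irrefl: "\<And>u. \<not> adj u u" and "u < n"
  shows "(\<Sum>i<n. \<phi> u i * index_sum n \<phi> i) = - d u - int (degree n adj u)"
proof -
  have "(\<Sum>i<n. \<phi> u i * index_sum n \<phi> i) = (\<Sum>i<n. \<Sum>v<n. \<phi> u i * \<phi> v i)"
    unfolding index_sum_def by (simp add: sum_distrib_left)
  also have "\<dots> = (\<Sum>v<n. \<Sum>i<n. \<phi> u i * \<phi> v i)"
    by (rule sum.swap)
  also have "\<dots> = (\<Sum>v<n. (if v = u then - d u else 0) - of_bool (adj u v))"
    using embedding_inner[OF emb \<open>u < n\<close>] irrefl by (intro sum.cong) auto
  also have "\<dots> = - d u - int (degree n adj u)"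
    using \<open>u < n\<close> unfolding degree_def by (simp add: sum_subtractf Collect_conj_eq lessThan_def Int_commute)
  finally show ?thesis .
qed

lemma sum_index_sum:
  assumes "is_embedding n adj d \<phi>"
  shows "(\<Sum>i<n. index_sum n \<phi> i) = (\<Sum>v<n. d v) + 2 * int n"
proof -
  have "(\<Sum>i<n. index_sum n \<phi> i) = (\<Sum>v<n. \<Sum>i<n. \<phi> v i)"
    unfolding index_sum_def by (rule sum.swap)
  also have "\<dots> = (\<Sum>v<n. d v + 2)"
    using embedding_coeff_sum[OF assms] by simp
  finally show ?thesis by (simp add: sum.distrib)
qed

lemma sum_index_sum_sq:
  assumes "is_embedding n adj d \<phi>" "\<And>u. \<not> adj u u"
  shows "(\<Sum>i<n. index_sum n \<phi> i ^ 2) = - (\<Sum>v<n. d v) - int (\<Sum>u<n. degree n adj u)"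
proof -
  have "index_sum n \<phi> i ^ 2 = (\<Sum>u<n. \<phi> u i * index_sum n \<phi> i)" for i
    by (simp add: power2_eq_square sum_distrib_right index_sum_def[of n \<phi> i])
  then have "(\<Sum>i<n. index_sum n \<phi> i ^ 2) = (\<Sum>i<n. \<Sum>u<n. \<phi> u i * index_sum n \<phi> i)"
    by simp
  also have "\<dots> = (\<Sum>u<n. \<Sum>i<n. \<phi> u i * index_sum n \<phi> i)"
    by (rule sum.swap)
  also have "\<dots> = (\<Sum>u<n. - d u - int (degree n adj u))"
    using embedding_inner_index_sum[OF assms] by simp
  finally show ?thesis by (simp add: sum_subtractf sum_negf)
qed

lemma sum_index_sum_pronic:
  assumes "plumbing_tree n adj" "is_embedding n adj d \<phi>"
  shows "(\<Sum>i<n. index_sum n \<phi> i * (index_sum n \<phi> i + 1)) = 2"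
proof -
  have "(\<Sum>i<n. index_sum n \<phi> i * (index_sum n \<phi> i + 1))
      = (\<Sum>i<n. index_sum n \<phi> i ^ 2) + (\<Sum>i<n. index_sum n \<phi> i)"
    by (simp add: algebra_simps power2_eq_square sum.distrib)
  then show ?thesis
    using sum_index_sum[OF assms(2)] sum_index_sum_sq[OF assms(2) plumbing_treeD(4)[OF assms(1)]]
      plumbing_tree_sum_degree[OF assms(1)] plumbing_treeD(1)[OF assms(1)] by (simp add: of_nat_diff)
qed

lemma sum_decoration_eq_iff:
  assumes "plumbing_tree n adj" "is_embedding n adj d \<phi>"
  shows "(\<Sum>v<n. d v) = - 3 * int n - 1 \<longleftrightarrow> (\<forall>i<n. index_sum n \<phi> i \<in> {-2, -1})"
proof -
  let ?s = "index_sum n \<phi>"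
  have "(?s i + 1) * (?s i + 1 + 1) = ?s i * (?s i + 1) + 2 * ?s i + 2" for i
    by (simp add: algebra_simps)
  then have "(\<Sum>i<n. (?s i + 1) * (?s i + 1 + 1))
      = (\<Sum>i<n. ?s i * (?s i + 1)) + 2 * (\<Sum>i<n. ?s i) + 2 * int n"
    by (simp add: sum.distrib sum_distrib_left)
  also have "\<dots> = 2 * ((\<Sum>v<n. d v) + 3 * int n + 1)"
    using sum_index_sum_pronic[OF assms] sum_index_sum[OF assms(2)] by simp
  finally have "(\<Sum>v<n. d v) = - 3 * int n - 1 \<longleftrightarrow> (\<Sum>i<n. (?s i + 1) * (?s i + 1 + 1)) = 0"
    by auto
  also have "\<dots> \<longleftrightarrow> (\<forall>i\<in>{..<n}. (?s i + 1) * (?s i + 1 + 1) = 0)"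
    by (rule sum_nonneg_eq_0_iff) (simp, rule pronic_nonneg)
  also have "\<dots> \<longleftrightarrow> (\<forall>i<n. ?s i \<in> {-2, -1})"
    unfolding pronic_eq_0_iff by force
  finally show ?thesis .
qed

lemma index_sum_neq_1:
  assumes S: "in_S n adj d" and emb: "is_embedding n adj d \<phi>"
    and nonzero: "\<forall>i<n. index_sum n \<phi> i \<noteq> 0" and "j < n"
  shows "index_sum n \<phi> j \<noteq> 1"
proof
  let ?s = "index_sum n \<phi>"
  assume "?s j = 1"
  have tree: "plumbing_tree n adj" and minimal: "\<forall>v<n. d v \<noteq> -1"
    using S unfolding in_S_def symplectic_plumbing_tree_def by auto
  have others: "?s i = -1" if "i < n" "i \<noteq> j" for i
    using sum_pronic_eq_2_others[OF _ sum_index_sum_pronic[OF tree emb], of j i] \<open>?s j = 1\<close>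
      \<open>j < n\<close> that nonzero by auto
  obtain u where "u < n" "0 < \<phi> u j"
    using \<open>?s j = 1\<close> sum_nonpos[of "{..<n}" "\<lambda>v. \<phi> v j"] unfolding index_sum_def
    by (metis lessThan_iff not_le zero_less_one)
  then have "\<phi> u j = 1"
    using embedding_coeff_range[OF emb \<open>u < n\<close>, of j] by auto
  \<comment> \<open>Pairing \<open>\<phi> u\<close> with the index sums in two ways shows that \<open>u\<close> is isolated.\<close>
  have "(\<Sum>i<n. \<phi> u i * ?s i) = (\<Sum>i<n. 2 * (if i = j then \<phi> u i else 0) - \<phi> u i)"
    using others \<open>?s j = 1\<close> by (intro sum.cong) auto
  also have "\<dots> = - d u"
    using \<open>j < n\<close> \<open>\<phi> u j = 1\<close> embedding_coeff_sum[OF emb \<open>u < n\<close>]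
    by (simp add: sum_subtractf sum_distrib_left[symmetric])
  finally have "degree n adj u = 0"
    using embedding_inner_index_sum[OF emb plumbing_treeD(4)[OF tree] \<open>u < n\<close>] by simp
  then have "n = 1"
    using plumbing_tree_degree_pos[OF tree \<open>u < n\<close>] plumbing_treeD(1)[OF tree] by fastforce
  then have "d u = - (\<phi> u j)\<^sup>2"
    using embedding_inner[OF emb \<open>u < n\<close> \<open>u < n\<close>] \<open>u < n\<close> \<open>j < n\<close> by (simp add: power2_eq_square)
  then show False
    using minimal \<open>u < n\<close> \<open>\<phi> u j = 1\<close> by simp
qed

theorem mainTheorem13:
  fixes n :: nat and adj :: "nat \<Rightarrow> nat \<Rightarrow> bool" and d :: "nat \<Rightarrow> int"
    and \<phi> :: "nat \<Rightarrow> nat \<Rightarrow> int"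
  assumes "in_S n adj d"
    and "is_embedding n adj d \<phi>"
    and "\<forall>i<n. \<not> index_type10 n \<phi> i"
  shows "(\<forall>i<n. \<not> index_type4 n \<phi> i) \<longleftrightarrow> (\<Sum>v<n. d v) = - 3 * int n - 1"
proof -
  have tree: "plumbing_tree n adj"
    using assms(1) unfolding in_S_def symplectic_plumbing_tree_def by blast
  note sum_d_iff = sum_decoration_eq_iff[OF tree assms(2)]
  show ?thesis
  proof
    assume no_type4: "\<forall>i<n. \<not> index_type4 n \<phi> i"
    have nonzero: "\<forall>i<n. index_sum n \<phi> i \<noteq> 0"
      using index_type4_if_index_sum_eq_0[OF assms(2)] assms(3) no_type4 by blast
    have "index_sum n \<phi> i \<in> {-2, -1}" if "i < n" for i
      using sum_pronic_eq_2_range[OF _ sum_index_sum_pronic[OF tree assms(2)], of i]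
        index_sum_neq_1[OF assms(1,2) nonzero that] nonzero that by auto
    then show "(\<Sum>v<n. d v) = - 3 * int n - 1"
      using sum_d_iff by blast
  next
    assume "(\<Sum>v<n. d v) = - 3 * int n - 1"
    then show "\<forall>i<n. \<not> index_type4 n \<phi> i"
      using sum_d_iff index_sum_eq_0_if_type4 by fastforce
  qed
qed

end
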